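(* Let $\mathscr{H}$ be a Hilbert space and let $U \in \mathcal{B}(\mathscr{H})$ be a unitary operator whose spectrum satisfies $\mathrm{sp}(U) \subset C_k$ for some $k \in \{1,2,3,4\}$. Then $U$ cannot be written as the product of three symmetries in $\mathcal{B}(\mathscr{H})$.
   Context: $\mathcal{B}(\mathscr{H})$ is the algebra of bounded operators on $\mathscr{H}$; a symmetry is a self-adjoint unitary. For $1 \le k \le 4$, $C_k := \{\exp(2\pi i\alpha) : \tfrac{k-1}{4} < \alpha < \tfrac{k}{4}\}$, the four connected components of $S^1 \setminus \{1, i, -1, -i\}$. *)

theory Defs
  imports "HOL-Analysis.Analysis"
begin

text \<open>Complex Hilbert spaces (not available in the distribution): a Banach space
  with a complex scalar multiplication extending the real one, and a complex inner
  product (antilinear in the first argument) inducing the norm.\<close>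

class chilbert_space = banach +
  fixes scaleC :: "complex \<Rightarrow> 'a \<Rightarrow> 'a"
    and cinner :: "'a \<Rightarrow> 'a \<Rightarrow> complex"
  assumes scaleC_of_real: "scaleC (complex_of_real r) x = scaleR r x"
    and scaleC_add_right: "scaleC a (x + y) = scaleC a x + scaleC a y"
    and scaleC_add_left: "scaleC (a + b) x = scaleC a x + scaleC b x"
    and scaleC_scaleC: "scaleC a (scaleC b x) = scaleC (a * b) x"
    and scaleC_one: "scaleC 1 x = x"
    and cinner_commute: "cinner x y = cnj (cinner y x)"
    and cinner_add_left: "cinner (x + y) z = cinner x z + cinner y z"
    and cinner_scaleC_left: "cinner (scaleC a x) y = cnj a * cinner x y"
    and cinner_norm: "cinner x x = complex_of_real ((norm x)\<^sup>2)"

definition bounded_op :: "('a::chilbert_space \<Rightarrow> 'a) \<Rightarrow> bool" where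
  "bounded_op T \<longleftrightarrow> (\<forall>x y. T (x + y) = T x + T y) \<and> (\<forall>c x. T (scaleC c x) = scaleC c (T x))
     \<and> (\<exists>K. \<forall>x. norm (T x) \<le> norm x * K)"

definition is_adjoint :: "('a::chilbert_space \<Rightarrow> 'a) \<Rightarrow> ('a \<Rightarrow> 'a) \<Rightarrow> bool" where
  "is_adjoint T S \<longleftrightarrow> (\<forall>x y. cinner (T x) y = cinner x (S y))"

definition unitary_op :: "('a::chilbert_space \<Rightarrow> 'a) \<Rightarrow> bool" where
  "unitary_op U \<longleftrightarrow> bounded_op U \<and> (\<exists>V. is_adjoint U V \<and> U \<circ> V = id \<and> V \<circ> U = id)"

definition symmetry_op :: "('a::chilbert_space \<Rightarrow> 'a) \<Rightarrow> bool" where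
  "symmetry_op S \<longleftrightarrow> unitary_op S \<and> is_adjoint S S"

definition op_spectrum :: "('a::chilbert_space \<Rightarrow> 'a) \<Rightarrow> complex set" where
  "op_spectrum T = {l. \<not> (\<exists>V. bounded_op V \<and> V \<circ> (\<lambda>x. T x - scaleC l x) = id
                                   \<and> (\<lambda>x. T x - scaleC l x) \<circ> V = id)}"

definition arcC :: "nat \<Rightarrow> complex set" where
  "arcC k = {exp (2 * pi * \<i> * complex_of_real a) | a. (real k - 1) / 4 < a \<and> a < real k / 4}"

end

theory Submission
  imports Defs
begin

text \<open>If \<open>U = S\<^sub>1 S\<^sub>2 S\<^sub>3\<close>, then \<open>W = S\<^sub>1 U = S\<^sub>2 S\<^sub>3\<close> is conjugate by \<open>S\<^sub>2\<close> to \<open>W\<^sup>-\<^sup>1\<close>, so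
  \<open>W - \<lambda>\<close> is bounded below iff \<open>W - cnj \<lambda>\<close> is, for \<open>\<bar>\<lambda>\<bar> = 1\<close>. The key tool is a spectral
  half-plane criterion: a unitary \<open>V\<close> with \<open>V - \<lambda>\<close> bounded below for all unit \<open>\<lambda>\<close> in the
  closed half-plane \<open>Re (b \<lambda>) \<le> 0\<close> has \<open>Re (b \<langle>x, V x\<rangle>) \<ge> \<delta> \<parallel>x\<parallel>\<^sup>2\<close>. With
  \<open>b = cnj (\<i>\<^sup>k\<^sup>-\<^sup>1)\<close>, which rotates \<open>C\<^sub>k\<close> into the open first quadrant, it makes both
  \<open>Re (b \<langle>x, U x\<rangle>)\<close> and \<open>Im (b \<langle>x, U x\<rangle>)\<close> coercive. Since \<open>\<langle>x, S\<^sub>1 x\<rangle>\<close> is real, this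
  forces \<open>W - \<lambda>\<close> to be bounded below whenever \<open>b \<lambda>\<close> lies in the closed second or fourth
  quadrant, and conjugation covers the other two. So \<open>W - \<lambda>\<close> is bounded below on the whole
  unit circle, and the criterion with \<open>b = \<plusminus>1\<close> makes both \<open>Re \<langle>x, W x\<rangle>\<close> and
  \<open>-Re \<langle>x, W x\<rangle>\<close> coercive, which is absurd on a nonzero space.\<close>

section \<open>Complex numbers and inner products\<close>

global_interpretation scaleC: module "scaleC :: complex \<Rightarrow> 'a \<Rightarrow> 'a::chilbert_space"
  by standard (simp_all add: scaleC_add_right scaleC_add_left scaleC_scaleC scaleC_one)

lemma cinner_add_right: "cinner x (y + z) = cinner x y + cinner x (z::'a::chilbert_space)"
  by (metis cinner_add_left cinner_commute complex_cnj_add)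

lemma cinner_scaleC_right: "cinner x (scaleC a y) = a * cinner x (y::'a::chilbert_space)"
  by (metis cinner_commute cinner_scaleC_left complex_cnj_cnj complex_cnj_mult)

lemma cinner_diff_right: "cinner x (y - z) = cinner x y - cinner x (z::'a::chilbert_space)"
proof -
  interpret additive "cinner x"
    by standard (rule cinner_add_right)
  show ?thesis
    by (rule diff)
qed

lemma norm_sq_cinner: "(norm x)\<^sup>2 = Re (cinner x (x::'a::chilbert_space))"
  by (simp add: cinner_norm)

lemma cinner_ext:
  assumes "\<And>z. cinner z u = cinner z (v::'a::chilbert_space)"
  shows "u = v"
proof -
  have "cinner (u - v) (u - v) = 0"
    using assms[of "u - v"] by (simp add: cinner_diff_right)
  then show ?thesis
    by (simp add: cinner_norm)
qed

lemma norm_scaleC: "norm (scaleC a (x::'a::chilbert_space)) = cmod a * norm x"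
proof -
  have "cinner (scaleC a x) (scaleC a x) = cnj a * a * cinner x x"
    by (simp add: cinner_scaleC_left cinner_scaleC_right)
  also have "cnj a * a = complex_of_real ((cmod a)\<^sup>2)"
    by (metis complex_norm_square mult.commute)
  finally have "complex_of_real ((norm (scaleC a x))\<^sup>2) = complex_of_real ((cmod a * norm x)\<^sup>2)"
    by (simp only: cinner_norm power_mult_distrib of_real_mult)
  then have "(norm (scaleC a x))\<^sup>2 = (cmod a * norm x)\<^sup>2"
    by (simp only: of_real_eq_iff)
  then show ?thesis
    by (simp add: power2_eq_iff_nonneg)
qed

lemma quadratic_nonneg_imp_discriminant:
  fixes a c N :: real
  assumes "0 \<le> a" "0 \<le> c" "0 \<le> N" and nonneg: "\<And>t. 0 \<le> a + 2 * t * N + t\<^sup>2 * N * c"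
  shows "N \<le> a * c"
proof -
  consider "N = 0" | "N > 0" "c = 0" | "c > 0"
    using assms(2,3) by linarith
  then show ?thesis
  proof cases
    case 2
    with nonneg[of "-(a + 1) / (2 * N)"] show ?thesis
      by (simp add: field_simps)
  next
    case 3
    with nonneg[of "-1 / c"] show ?thesis
      by (simp add: field_simps power2_eq_square)
  qed (use assms in simp)
qed

lemma cnj_i_power_square: "(cnj (\<i> ^ n))\<^sup>2 = 1 \<or> (cnj (\<i> ^ n))\<^sup>2 = -1"
proof -
  have "(cnj (\<i> ^ n))\<^sup>2 = (-1) ^ n"
    by (simp flip: power_mult power_mult_distrib add: power2_eq_square mult.commute[of n])
  then show ?thesis
    by (metis minus_one_power_iff)
qed

lemma arcC_rotate_first_quadrant:
  assumes "1 \<le> k" "l \<in> arcC k"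
  shows "0 < Re (cnj (\<i> ^ (k - 1)) * l)" "0 < Im (cnj (\<i> ^ (k - 1)) * l)"
proof -
  obtain a where a: "l = cis (2 * pi * a)" "(real k - 1) / 4 < a" "a < real k / 4"
    using assms(2) unfolding arcC_def cis_conv_exp by (auto simp: mult_ac)
  define t where "t = (pi * (4 * a) - pi * (real k - 1)) / 2"
  have "\<i> ^ (k - 1) = cis (real (k - 1) * (pi / 2))"
    using Complex.DeMoivre[of "pi / 2" "k - 1"] by simp
  then have l: "cnj (\<i> ^ (k - 1)) * l = cis t"
    using assms(1) unfolding a(1) t_def by (simp add: cis_cnj cis_mult of_nat_diff field_simps)
  have "pi * (real k - 1) < pi * (4 * a)" "pi * (4 * a) < pi * real k"
    using a(2,3) by (intro mult_strict_left_mono; simp)+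
  moreover have "pi * real k = pi * (real k - 1) + pi"
    by (simp add: right_diff_distrib)
  ultimately have "0 < t" "t < pi / 2"
    unfolding t_def by simp_all
  then show "0 < Re (cnj (\<i> ^ (k - 1)) * l)" "0 < Im (cnj (\<i> ^ (k - 1)) * l)"
    unfolding l by (simp_all add: cos_gt_zero sin_gt_zero)
qed

lemma unit_roots_of_real_quadratic:
  fixes s :: real
  assumes "0 \<le> s" "s \<le> 1"
  obtains r1 r2 :: complex where "cmod r1 = 1" "cmod r2 = 1" "Re r1 \<le> 0" "Re r2 \<le> 0"
    "r1 + r2 = - 2 * of_real s" "r1 * r2 = 1"
proof -
  define q where "q = sqrt (1 - s\<^sup>2)"
  have "q\<^sup>2 = 1 - s\<^sup>2"
    unfolding q_def using assms by (simp add: power_le_one)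
  then show ?thesis
    using assms by (intro that[of "Complex (- s) q" "Complex (- s) (- q)"])
      (auto simp: cmod_def complex_eq_iff power2_eq_square)
qed

section \<open>Operators bounded below and coercive forms\<close>

definition clinear :: "('a::chilbert_space \<Rightarrow> 'a) \<Rightarrow> bool" where
  "clinear T \<longleftrightarrow> (\<forall>x y. T (x + y) = T x + T y) \<and> (\<forall>c x. T (scaleC c x) = scaleC c (T x))"

lemma clinear_add: "clinear T \<Longrightarrow> T (x + y) = T x + T y"
  and clinear_scaleC: "clinear T \<Longrightarrow> T (scaleC c x) = scaleC c (T x)"
  by (simp_all add: clinear_def)

lemma clinear_diff: "clinear T \<Longrightarrow> T (x - y) = T x - T y"
  by (metis clinear_add add_diff_cancel eq_diff_eq)

definition bounded_below :: "('a::real_normed_vector \<Rightarrow> 'b::real_normed_vector) \<Rightarrow> bool" where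
  "bounded_below T \<longleftrightarrow> (\<exists>L>0. \<forall>x. norm x \<le> L * norm (T x))"

definition re_coercive :: "complex \<Rightarrow> ('a::chilbert_space \<Rightarrow> 'a) \<Rightarrow> bool" where
  "re_coercive b T \<longleftrightarrow> (\<exists>\<delta>>0. \<forall>x. \<delta> * (norm x)\<^sup>2 \<le> Re (b * cinner x (T x)))"

lemma positive_op_Cauchy_Schwarz:
  fixes B :: "'a::chilbert_space \<Rightarrow> 'a"
  assumes B: "clinear B" "is_adjoint B B" and pos: "\<And>x. 0 \<le> Re (cinner x (B x))"
  shows "(cmod (cinner x (B y)))\<^sup>2 \<le> Re (cinner x (B x)) * Re (cinner y (B y))"
proof -
  define z where "z = cinner x (B y)"
  define N where "N = (cmod z)\<^sup>2"
  have zz: "z * (cnj z * X) = complex_of_real N * X" "cnj z * (z * X) = complex_of_real N * X" for X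
    unfolding N_def by (metis complex_norm_square mult.assoc mult.commute)+
  have yx: "cinner y (B x) = cnj z"
    using B(2) unfolding z_def is_adjoint_def by (metis cinner_commute)
  have "0 \<le> Re (cinner x (B x)) + 2 * t * N + t\<^sup>2 * N * Re (cinner y (B y))" for t :: real
  proof -
    define w where "w = complex_of_real t * cnj z"
    define v where "v = x + scaleC w y"
    have "cinner v (B v) = cinner x (B x) + w * z + cnj w * cnj z + cnj w * w * cinner y (B y)"
      unfolding v_def using B(1)
      by (simp add: clinear_add clinear_scaleC cinner_add_left cinner_add_right cinner_scaleC_left
          cinner_scaleC_right yx z_def algebra_simps)
    also have "\<dots> = cinner x (B x) + complex_of_real (2 * t * N) + complex_of_real (t\<^sup>2 * N) * cinner y (B y)"
      unfolding w_def by (simp add: algebra_simps power2_eq_square zz)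
    finally show ?thesis
      using pos[of v] by simp
  qed
  then show ?thesis
    unfolding N_def z_def by (intro quadratic_nonneg_imp_discriminant) (auto simp: pos)
qed

lemma Cauchy_Schwarz_cinner: "cmod (cinner x y) \<le> norm x * norm (y::'a::chilbert_space)"
proof -
  have "(cmod (cinner x (id y)))\<^sup>2 \<le> Re (cinner x (id x)) * Re (cinner y (id y))"
    by (rule positive_op_Cauchy_Schwarz) (auto simp: clinear_def is_adjoint_def simp flip: norm_sq_cinner)
  also have "\<dots> = (norm x * norm y)\<^sup>2"
    by (simp add: norm_sq_cinner power_mult_distrib)
  finally show ?thesis
    by (simp add: power2_le_iff_abs_le)
qed

lemma bounded_below_comp:
  assumes "bounded_below S" "bounded_below T"
  shows "bounded_below (\<lambda>x. S (T x))"
proof -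
  obtain L M where LM: "L > 0" "M > 0" "\<And>y. norm y \<le> L * norm (S y)" "\<And>x. norm x \<le> M * norm (T x)"
    using assms unfolding bounded_below_def by blast
  have "norm x \<le> (M * L) * norm (S (T x))" for x
  proof -
    have "norm x \<le> M * norm (T x)" by (fact LM(4))
    also have "\<dots> \<le> M * (L * norm (S (T x)))" using LM(2,3) by simp
    finally show ?thesis by (simp add: mult.assoc)
  qed
  with LM(1,2) show ?thesis
    unfolding bounded_below_def by (metis mult_pos_pos)
qed

lemma bounded_below_isometry: "(\<And>x. norm (T x) = norm x) \<Longrightarrow> bounded_below T"
  unfolding bounded_below_def by (intro exI[of _ 1]) simp

lemma bounded_below_norm_mono:
  assumes "bounded_below S" "0 < c" "\<And>x. c * norm (S x) \<le> norm (T x)"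
  shows "bounded_below T"
proof -
  obtain L where L: "L > 0" "\<And>x. norm x \<le> L * norm (S x)"
    using assms(1) unfolding bounded_below_def by blast
  have "norm x \<le> (L / c) * norm (T x)" for x
  proof -
    have "norm (S x) \<le> norm (T x) / c"
      using assms(2) assms(3)[of x] by (simp add: pos_le_divide_eq mult.commute)
    then have "L * norm (S x) \<le> L * (norm (T x) / c)"
      using L(1) by (intro mult_left_mono) auto
    with L(2)[of x] show ?thesis
      by simp
  qed
  with L(1) assms(2) show ?thesis
    unfolding bounded_below_def by (metis divide_pos_pos)
qed

lemma bounded_below_if_not_in_spectrum:
  assumes "l \<notin> op_spectrum T"
  shows "bounded_below (\<lambda>x. T x - scaleC l x)"
proof -
  obtain R where "bounded_op R" and "R \<circ> (\<lambda>x. T x - scaleC l x) = id"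
    using assms unfolding op_spectrum_def by blast
  then obtain K where R: "\<And>x. R (T x - scaleC l x) = x" and K: "\<And>y. norm (R y) \<le> norm y * K"
    unfolding bounded_op_def by (metis comp_apply id_apply)
  have "norm x \<le> max K 1 * norm (T x - scaleC l x)" for x
  proof -
    have "norm x \<le> norm (T x - scaleC l x) * K"
      using K R by metis
    also have "\<dots> \<le> norm (T x - scaleC l x) * max K 1"
      by (simp add: mult_left_mono)
    finally show ?thesis
      by (simp add: mult.commute)
  qed
  then show ?thesis
    unfolding bounded_below_def by (intro exI[of _ "max K 1"]) auto
qed

lemma bounded_below_if_re_coercive:
  assumes "re_coercive b T"
  shows "bounded_below T"
proof -
  obtain \<delta> where \<delta>: "\<delta> > 0" "\<And>x. \<delta> * (norm x)\<^sup>2 \<le> Re (b * cinner x (T x))"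
    using assms unfolding re_coercive_def by blast
  have "norm x \<le> ((cmod b + 1) / \<delta>) * norm (T x)" for x
  proof (cases "x = 0")
    case False
    have "\<delta> * norm x * norm x \<le> Re (b * cinner x (T x))"
      using \<delta>(2)[of x] by (simp add: power2_eq_square mult.assoc)
    also have "\<dots> \<le> cmod b * cmod (cinner x (T x))"
      using complex_Re_le_cmod by (metis norm_mult)
    also have "\<dots> \<le> cmod b * (norm x * norm (T x))"
      by (simp add: Cauchy_Schwarz_cinner mult_left_mono)
    also have "\<dots> \<le> (cmod b + 1) * norm (T x) * norm x"
      by (simp add: mult_right_mono algebra_simps)
    finally have "\<delta> * norm x \<le> (cmod b + 1) * norm (T x)"
      using False by simp
    with \<delta>(1) show ?thesis
      by (simp add: field_simps)
  qed (use \<delta>(1) in simp)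
  moreover have "(cmod b + 1) / \<delta> > 0"
    using \<delta>(1) by (simp add: add_nonneg_pos)
  ultimately show ?thesis
    unfolding bounded_below_def by blast
qed

lemma re_coercive_cone:
  assumes "re_coercive b T" "re_coercive c T" "0 \<le> \<alpha>" "0 \<le> \<beta>" "0 < \<alpha> + \<beta>"
  shows "re_coercive (of_real \<alpha> * b + of_real \<beta> * c) T"
proof -
  obtain \<delta> \<epsilon> where \<delta>\<epsilon>: "\<delta> > 0" "\<epsilon> > 0" "\<And>x. \<delta> * (norm x)\<^sup>2 \<le> Re (b * cinner x (T x))"
    "\<And>x. \<epsilon> * (norm x)\<^sup>2 \<le> Re (c * cinner x (T x))"
    using assms(1,2) unfolding re_coercive_def by blast
  have "(\<alpha> * \<delta> + \<beta> * \<epsilon>) * (norm x)\<^sup>2 \<le> Re ((of_real \<alpha> * b + of_real \<beta> * c) * cinner x (T x))" for x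
  proof -
    have "\<alpha> * (\<delta> * (norm x)\<^sup>2) + \<beta> * (\<epsilon> * (norm x)\<^sup>2)
        \<le> \<alpha> * Re (b * cinner x (T x)) + \<beta> * Re (c * cinner x (T x))"
      using assms(3,4) \<delta>\<epsilon>(3,4) by (intro add_mono mult_left_mono) auto
    then show ?thesis
      by (simp add: algebra_simps)
  qed
  moreover have "\<alpha> * \<delta> + \<beta> * \<epsilon> > 0"
  proof (cases "\<alpha> = 0")
    case True
    with assms(5) \<delta>\<epsilon>(2) show ?thesis by simp
  next
    case False
    with assms(3,4) \<delta>\<epsilon>(1,2) show ?thesis
      by (simp add: add_pos_nonneg)
  qed
  ultimately show ?thesis
    unfolding re_coercive_def by blast
qed

lemma re_coercive_zero_imp_trivial:
  fixes T :: "'a::chilbert_space \<Rightarrow> 'a" and x :: 'a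
  assumes "re_coercive 0 T"
  shows "x = 0"
proof -
  obtain \<delta> where "\<delta> > 0" "\<delta> * (norm x)\<^sup>2 \<le> 0"
    using assms unfolding re_coercive_def by auto
  then show ?thesis
    by (simp add: mult_le_0_iff)
qed

lemma positive_bounded_below_imp_re_coercive:
  fixes B :: "'a::chilbert_space \<Rightarrow> 'a"
  assumes B: "clinear B" "is_adjoint B B" and pos: "\<And>x. 0 \<le> Re (cinner x (B x))"
    and M: "0 < M" "\<And>x. norm (B x) \<le> M * norm x" and "bounded_below B"
  shows "re_coercive 1 B"
proof -
  obtain L where L: "L > 0" "\<And>x. norm x \<le> L * norm (B x)"
    using \<open>bounded_below B\<close> unfolding bounded_below_def by blast
  have "(norm x)\<^sup>2 / (M * L\<^sup>2) \<le> Re (cinner x (B x))" for x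
  proof (cases "B x = 0")
    case True
    then show ?thesis
      using L(2)[of x] by (simp add: cinner_norm)
  next
    case False
    have "cinner x (B (B x)) = complex_of_real ((norm (B x))\<^sup>2)"
      using B(2) unfolding is_adjoint_def by (metis cinner_norm)
    then have "((norm (B x))\<^sup>2)\<^sup>2 = (cmod (cinner x (B (B x))))\<^sup>2"
      by (simp only: norm_of_real) simp
    also have "\<dots> \<le> Re (cinner x (B x)) * Re (cinner (B x) (B (B x)))"
      by (rule positive_op_Cauchy_Schwarz[OF B pos])
    also have "\<dots> \<le> Re (cinner x (B x)) * (M * (norm (B x))\<^sup>2)"
    proof (intro mult_left_mono[OF _ pos])
      have "Re (cinner (B x) (B (B x))) \<le> norm (B x) * norm (B (B x))"
        using complex_Re_le_cmod Cauchy_Schwarz_cinner order_trans by blast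
      also have "\<dots> \<le> norm (B x) * (M * norm (B x))"
        using M(2)[of "B x"] by (simp add: mult_left_mono)
      finally show "Re (cinner (B x) (B (B x))) \<le> M * (norm (B x))\<^sup>2"
        by (simp add: power2_eq_square mult.left_commute)
    qed
    finally have "(norm (B x))\<^sup>2 \<le> M * Re (cinner x (B x))"
      using False by (simp add: power2_eq_square mult.commute mult.left_commute)
    moreover have "(norm x)\<^sup>2 \<le> L\<^sup>2 * (norm (B x))\<^sup>2"
      using L(2)[of x] by (metis norm_ge_zero power_mono power_mult_distrib)
    ultimately have "(norm x)\<^sup>2 \<le> L\<^sup>2 * (M * Re (cinner x (B x)))"
      by (meson order_trans mult_left_mono zero_le_power2)
    then show ?thesis
      using M(1) L(1) by (simp add: field_simps)
  qed
  then show ?thesis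
    unfolding re_coercive_def using M(1) L(1)
    by (intro exI[of _ "1 / (M * L\<^sup>2)"]) simp
qed

lemma selfadjoint_contraction_shift_re_coercive:
  fixes A :: "'a::chilbert_space \<Rightarrow> 'a"
  assumes A: "clinear A" "is_adjoint A A" "\<And>x. norm (A x) \<le> norm x"
    and s: "0 \<le> s" "s \<le> 1" and pos: "\<And>x. 0 \<le> Re (cinner x (A x)) + s * (norm x)\<^sup>2"
    and "bounded_below (\<lambda>x. A x + scaleC (of_real s) x)"
  shows "\<exists>\<delta>>0. \<forall>x. \<delta> * (norm x)\<^sup>2 \<le> Re (cinner x (A x)) + s * (norm x)\<^sup>2"
proof -
  define B where "B = (\<lambda>x. A x + scaleC (of_real s) x)"
  have Re_B: "Re (cinner x (B x)) = Re (cinner x (A x)) + s * (norm x)\<^sup>2" for x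
    by (simp add: B_def cinner_add_right cinner_scaleC_right norm_sq_cinner)
  have "re_coercive 1 B"
  proof (rule positive_bounded_below_imp_re_coercive)
    show "clinear B"
      using A(1) by (simp add: clinear_def B_def scaleC_add_right mult.commute)
    show "is_adjoint B B"
      using A(2) by (simp add: is_adjoint_def B_def cinner_add_left cinner_add_right
          cinner_scaleC_left cinner_scaleC_right)
    show "norm (B x) \<le> 2 * norm x" for x
    proof -
      have "norm (B x) \<le> norm (A x) + s * norm x"
        unfolding B_def using s norm_triangle_ineq by (metis norm_scaleC norm_of_real abs_of_nonneg)
      also have "\<dots> \<le> 2 * norm x"
        using A(3)[of x] s by (smt (verit) mult_left_le_one_le norm_ge_zero)
      finally show ?thesis .
    qed
  qed (use Re_B pos \<open>bounded_below _\<close> in \<open>auto simp: B_def\<close>)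
  then show ?thesis
    unfolding re_coercive_def by (simp add: Re_B)
qed

lemma Inf_nonneg_shifts_mem:
  fixes g h :: "'a \<Rightarrow> real"
  defines "T \<equiv> {s. 0 \<le> s \<and> (\<forall>x. 0 \<le> g x + s * h x)}"
  assumes h: "\<And>x. 0 \<le> h x" and g: "\<And>x. h x = 0 \<Longrightarrow> 0 \<le> g x" and "T \<noteq> {}"
  shows "Inf T \<in> T"
proof -
  have "0 \<le> g x + Inf T * h x" for x
  proof (cases "h x = 0")
    case False
    with h[of x] have "0 < h x"
      by linarith
    have "- g x / h x \<le> Inf T"
    proof (rule cInf_greatest)
      fix s
      assume "s \<in> T"
      then have "0 \<le> g x + s * h x"
        by (simp add: T_def)
      with \<open>0 < h x\<close> show "- g x / h x \<le> s"
        by (simp add: field_simps)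
    qed fact
    with \<open>0 < h x\<close> show ?thesis
      by (simp add: field_simps)
  qed (simp add: g)
  moreover have "0 \<le> Inf T"
    using \<open>T \<noteq> {}\<close> by (intro cInf_greatest) (auto simp: T_def)
  ultimately show ?thesis
    unfolding T_def by blast
qed

lemma Re_cinner_contraction_ge:
  fixes A :: "'a::chilbert_space \<Rightarrow> 'a"
  assumes "norm (A x) \<le> norm x"
  shows "- (norm x)\<^sup>2 \<le> Re (cinner x (A x))"
proof -
  have "\<bar>Re (cinner x (A x))\<bar> \<le> norm x * norm (A x)"
    using abs_Re_le_cmod Cauchy_Schwarz_cinner order_trans by blast
  also have "\<dots> \<le> norm x * norm x"
    using assms by (simp add: mult_left_mono)
  finally show ?thesis
    by (simp add: power2_eq_square)
qed

text \<open>Let \<open>s\<^sub>0\<close> be the least \<open>s \<in> [0, 1]\<close> with \<open>A + s \<ge> 0\<close>. If \<open>s\<^sub>0 > 0\<close>, the operator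
  \<open>A + s\<^sub>0\<close> is positive and bounded below, hence coercive, so \<open>A + s \<ge> 0\<close> persists for
  some \<open>s < s\<^sub>0\<close>. Thus \<open>s\<^sub>0 = 0\<close>, and the same argument at \<open>s = 0\<close> gives coercivity of \<open>A\<close>.\<close>

lemma selfadjoint_contraction_re_coercive:
  fixes A :: "'a::chilbert_space \<Rightarrow> 'a"
  assumes A: "clinear A" "is_adjoint A A" "\<And>x. norm (A x) \<le> norm x"
    and shifts: "\<And>s. 0 \<le> s \<Longrightarrow> s \<le> 1 \<Longrightarrow> bounded_below (\<lambda>x. A x + scaleC (of_real s) x)"
  shows "re_coercive 1 A"
proof -
  define g where "g x = Re (cinner x (A x))" for x
  define T where "T = {s. 0 \<le> s \<and> (\<forall>x. 0 \<le> g x + s * (norm x)\<^sup>2)}"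
  define s0 where "s0 = Inf T"
  have step: "\<exists>\<delta>>0. \<forall>x. \<delta> * (norm x)\<^sup>2 \<le> g x + s * (norm x)\<^sup>2" if "s \<in> T" "s \<le> 1" for s
    using that selfadjoint_contraction_shift_re_coercive[OF A _ _ _ shifts] unfolding T_def g_def by blast
  have "0 \<le> g x + 1 * (norm x)\<^sup>2" for x
    using Re_cinner_contraction_ge[of A x] A(3)[of x] unfolding g_def by linarith
  then have "1 \<in> T"
    unfolding T_def by simp
  have "s0 \<in> T"
    unfolding s0_def T_def
  proof (rule Inf_nonneg_shifts_mem)
    show "{s. 0 \<le> s \<and> (\<forall>x. 0 \<le> g x + s * (norm x)\<^sup>2)} \<noteq> {}"
      using \<open>1 \<in> T\<close> unfolding T_def by blast
  qed (use clinear_diff[OF A(1), of 0 0] in \<open>auto simp: g_def cinner_norm\<close>)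
  have bdd: "bdd_below T"
    unfolding T_def by (auto intro: bdd_belowI[of _ 0])
  have "s0 \<le> 1"
    unfolding s0_def using \<open>1 \<in> T\<close> bdd by (rule cInf_lower)
  have "s0 = 0"
  proof (rule ccontr)
    assume "s0 \<noteq> 0"
    obtain \<delta> where \<delta>: "\<delta> > 0" "\<And>x. \<delta> * (norm x)\<^sup>2 \<le> g x + s0 * (norm x)\<^sup>2"
      using step[OF \<open>s0 \<in> T\<close> \<open>s0 \<le> 1\<close>] by blast
    define s1 where "s1 = max 0 (s0 - \<delta>)"
    have "0 \<le> g x + s1 * (norm x)\<^sup>2" for x
    proof -
      have "0 \<le> g x + (s0 - \<delta>) * (norm x)\<^sup>2"
        using \<delta>(2)[of x] by (simp add: algebra_simps)
      also have "\<dots> \<le> g x + s1 * (norm x)\<^sup>2"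
        unfolding s1_def by (intro add_left_mono mult_right_mono) auto
      finally show ?thesis .
    qed
    then have "s0 \<le> s1"
      unfolding s0_def using bdd by (intro cInf_lower) (auto simp: T_def s1_def)
    with \<open>s0 \<in> T\<close> \<open>s0 \<noteq> 0\<close> \<delta>(1) show False
      unfolding s1_def T_def by (simp add: max_def split: if_splits)
  qed
  then show ?thesis
    using step[OF \<open>s0 \<in> T\<close> \<open>s0 \<le> 1\<close>] unfolding re_coercive_def g_def by simp
qed

section \<open>Unitaries and symmetries\<close>

lemma unitary_opE:
  fixes U :: "'a::chilbert_space \<Rightarrow> 'a"
  assumes "unitary_op U"
  obtains V where "clinear U" "clinear V" "is_adjoint U V" "is_adjoint V U"
    "\<And>x. U (V x) = x" "\<And>x. V (U x) = x"
proof -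
  obtain V where "bounded_op U" and adj: "is_adjoint U V" and "U \<circ> V = id" "V \<circ> U = id"
    using assms unfolding unitary_op_def by blast
  then have U: "clinear U" and UV: "\<And>x. U (V x) = x" and VU: "\<And>x. V (U x) = x"
    unfolding bounded_op_def clinear_def by (auto simp: pointfree_idE)
  have "V (x + y) = V x + V y" for x y
  proof -
    have "V (x + y) = V (U (V x + V y))"
      by (simp add: clinear_add[OF U] UV)
    then show ?thesis
      by (simp add: VU)
  qed
  moreover have "V (scaleC c x) = scaleC c (V x)" for c x
  proof -
    have "V (scaleC c x) = V (U (scaleC c (V x)))"
      by (simp add: clinear_scaleC[OF U] UV)
    then show ?thesis
      by (simp add: VU)
  qed
  ultimately have "clinear V"
    unfolding clinear_def by blast
  moreover have "is_adjoint V U"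
    using adj unfolding is_adjoint_def by (metis cinner_commute)
  ultimately show ?thesis
    using that U adj UV VU by blast
qed

lemma norm_eq_if_adjoint_left_inverse:
  assumes "is_adjoint T S" "S (T x) = x"
  shows "norm (T x) = norm x"
proof -
  have "(norm (T x))\<^sup>2 = (norm x)\<^sup>2"
    using assms unfolding is_adjoint_def by (simp add: norm_sq_cinner)
  then show ?thesis
    by (simp add: power2_eq_iff_nonneg)
qed

lemma symmetry_opD:
  fixes S :: "'a::chilbert_space \<Rightarrow> 'a"
  assumes "symmetry_op S"
  shows "clinear S" "is_adjoint S S" "S (S x) = x" "norm (S x) = norm x"
proof -
  obtain V where V: "clinear S" "is_adjoint S V" "\<And>x. S (V x) = x"
    using assms unfolding symmetry_op_def by (auto elim: unitary_opE)
  show "is_adjoint S S"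
    using assms unfolding symmetry_op_def by blast
  have "V y = S y" for y
  proof (rule cinner_ext)
    fix z
    show "cinner z (V y) = cinner z (S y)"
      using V(2) \<open>is_adjoint S S\<close> unfolding is_adjoint_def by metis
  qed
  then have "V = S" ..
  with V \<open>is_adjoint S S\<close> show "clinear S" "S (S x) = x" "norm (S x) = norm x"
    by (auto intro: norm_eq_if_adjoint_left_inverse)
qed

lemma unitary_op_comp:
  fixes S T :: "'a::chilbert_space \<Rightarrow> 'a"
  assumes "unitary_op S" "unitary_op T"
  shows "unitary_op (S \<circ> T)"
proof -
  obtain V where S: "clinear S" "is_adjoint S V" "\<And>x. S (V x) = x" "\<And>x. V (S x) = x"
    by (rule unitary_opE[OF assms(1)]) blast
  obtain W where T: "clinear T" "is_adjoint T W" "\<And>x. T (W x) = x" "\<And>x. W (T x) = x"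
    by (rule unitary_opE[OF assms(2)]) blast
  have "norm (S (T x)) = norm x" for x
    by (simp add: norm_eq_if_adjoint_left_inverse[OF S(2) S(4)] norm_eq_if_adjoint_left_inverse[OF T(2) T(4)])
  then have "bounded_op (S \<circ> T)"
    using S(1) T(1) unfolding bounded_op_def clinear_def by (auto intro: exI[of _ 1])
  moreover have "is_adjoint (S \<circ> T) (W \<circ> V)"
    using S(2) T(2) unfolding is_adjoint_def by simp
  ultimately show ?thesis
    unfolding unitary_op_def using S(3,4) T(3,4) by (auto simp: fun_eq_iff intro!: exI[of _ "W \<circ> V"])
qed

text \<open>For \<open>0 \<le> s \<le> 1\<close> the operator \<open>(b U + cnj b U\<^sup>-\<^sup>1) / 2 + s\<close> factors as
  \<open>(b / 2) U\<^sup>-\<^sup>1 (U - \<lambda>\<^sub>1) (U - \<lambda>\<^sub>2)\<close>, where \<open>b \<lambda>\<^sub>1\<close>, \<open>b \<lambda>\<^sub>2 = -s \<plusminus> \<i> sqrt (1 - s\<^sup>2)\<close> are the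
  roots of \<open>z\<^sup>2 + 2 s z + 1\<close>; both lie on the unit circle with non-positive real part.\<close>

lemma unitary_real_part_shift_bounded_below:
  fixes U V :: "'a::chilbert_space \<Rightarrow> 'a"
  assumes U: "clinear U" and V: "clinear V" "\<And>x. V (U x) = x" "\<And>x. norm (V x) = norm x"
    and b: "cmod b = 1" and s: "0 \<le> s" "s \<le> 1"
    and hb: "\<And>l. cmod l = 1 \<Longrightarrow> Re (b * l) \<le> 0 \<Longrightarrow> bounded_below (\<lambda>x. U x - scaleC l x)"
  shows "bounded_below (\<lambda>x. scaleC (b / 2) (U x) + scaleC (cnj b / 2) (V x) + scaleC (of_real s) x)"
proof -
  obtain r1 r2 where r: "cmod r1 = 1" "cmod r2 = 1" "Re r1 \<le> 0" "Re r2 \<le> 0"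
    "r1 + r2 = - 2 * of_real s" "r1 * r2 = 1"
    using unit_roots_of_real_quadratic[OF s] by blast
  define l1 where "l1 = cnj b * r1"
  define l2 where "l2 = cnj b * r2"
  have bb: "b * cnj b = 1"
    using b complex_norm_square[of b] by simp
  have bl: "b * l1 = r1" "b * l2 = r2"
    unfolding l1_def l2_def by (simp_all add: mult.assoc[symmetric] bb)
  have l: "cmod l1 = 1" "Re (b * l1) \<le> 0" "cmod l2 = 1" "Re (b * l2) \<le> 0"
    unfolding bl using r(1-4) b by (simp_all add: l1_def l2_def norm_mult)
  have sum: "b / 2 * (l1 + l2) = - of_real s"
  proof -
    have "b / 2 * (l1 + l2) = (b * cnj b) * (r1 + r2) / 2"
      unfolding l1_def l2_def by (simp add: algebra_simps)
    then show ?thesis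
      using r(5) bb by simp
  qed
  have prod: "b / 2 * (l1 * l2) = cnj b / 2"
  proof -
    have "b / 2 * (l1 * l2) = (b * cnj b) * cnj b * (r1 * r2) / 2"
      unfolding l1_def l2_def by (simp add: algebra_simps)
    then show ?thesis
      using r(6) bb by simp
  qed
  define D where "D x = U (U x - scaleC l2 x) - scaleC l1 (U x - scaleC l2 x)" for x
  have "bounded_below D"
    unfolding D_def using hb[OF l(1,2)] hb[OF l(3,4)] by (rule bounded_below_comp)
  have factor: "scaleC (b / 2) (V (D x)) = scaleC (b / 2) (U x) + scaleC (cnj b / 2) (V x) + scaleC (of_real s) x"
    for x
  proof -
    have "V (D x) = U x - scaleC (l1 + l2) x + scaleC (l1 * l2) (V x)"
      unfolding D_def using U V(1)
      by (simp add: clinear_add clinear_diff clinear_scaleC V(2) scaleC.scale_left_distrib algebra_simps)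
    then have "scaleC (b / 2) (V (D x))
        = scaleC (b / 2) (U x) - scaleC (b / 2 * (l1 + l2)) x + scaleC (b / 2 * (l1 * l2)) (V x)"
      by (simp only: scaleC.scale_right_diff_distrib scaleC.scale_right_distrib scaleC.scale_scale)
    then show ?thesis
      unfolding sum prod by (simp add: algebra_simps)
  qed
  show ?thesis
  proof (rule bounded_below_norm_mono[OF \<open>bounded_below D\<close>])
    show "1 / 2 * norm (D x) \<le> norm (scaleC (b / 2) (U x) + scaleC (cnj b / 2) (V x) + scaleC (of_real s) x)"
      for x
      by (simp add: norm_scaleC V(3) b norm_divide flip: factor)
  qed simp
qed

lemma unitary_re_coercive:
  fixes U :: "'a::chilbert_space \<Rightarrow> 'a"
  assumes "unitary_op U" and b: "cmod b = 1"
    and hb: "\<And>l. cmod l = 1 \<Longrightarrow> Re (b * l) \<le> 0 \<Longrightarrow> bounded_below (\<lambda>x. U x - scaleC l x)"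
  shows "re_coercive b U"
proof -
  obtain V where U: "clinear U" "is_adjoint U V" "\<And>x. U (V x) = x"
    and V: "clinear V" "is_adjoint V U" "\<And>x. V (U x) = x"
    by (rule unitary_opE[OF assms(1)]) blast
  have norm_U: "norm (U x) = norm x" and norm_V: "norm (V x) = norm x" for x
    using U(2) V(2) U(3) V(3) by (simp_all add: norm_eq_if_adjoint_left_inverse)
  define A where "A = (\<lambda>x. scaleC (b / 2) (U x) + scaleC (cnj b / 2) (V x))"
  have "re_coercive 1 A"
  proof (rule selfadjoint_contraction_re_coercive)
    show "clinear A"
      using U(1) V(1) unfolding clinear_def A_def
      by (simp add: scaleC.scale_right_distrib algebra_simps mult.commute)
    show "is_adjoint A A"
      using U(2) V(2) unfolding is_adjoint_def A_def
      by (simp add: cinner_add_right cinner_add_left cinner_scaleC_right cinner_scaleC_left add.commute)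
    show "norm (A x) \<le> norm x" for x
    proof -
      have "norm (A x) \<le> norm (scaleC (b / 2) (U x)) + norm (scaleC (cnj b / 2) (V x))"
        unfolding A_def by (rule norm_triangle_ineq)
      also have "\<dots> = norm x"
        by (simp add: norm_scaleC norm_U norm_V b norm_divide)
      finally show ?thesis .
    qed
    show "bounded_below (\<lambda>x. A x + scaleC (of_real s) x)" if "0 \<le> s" "s \<le> 1" for s
      unfolding A_def using unitary_real_part_shift_bounded_below[OF U(1) V(1,3) norm_V b that hb] .
  qed
  moreover have "Re (cinner x (A x)) = Re (b * cinner x (U x))" for x
  proof -
    have "cinner x (V x) = cnj (cinner x (U x))"
      using U(2) unfolding is_adjoint_def by (metis cinner_commute)
    then show ?thesis
      by (simp add: A_def cinner_add_right cinner_scaleC_right)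
  qed
  ultimately show ?thesis
    unfolding re_coercive_def by simp
qed

lemma unitary_re_coercive_if_spectrum:
  fixes U :: "'a::chilbert_space \<Rightarrow> 'a"
  assumes "unitary_op U" "cmod b = 1" "\<And>l. l \<in> op_spectrum U \<Longrightarrow> 0 < Re (b * l)"
  shows "re_coercive b U"
  using assms by (intro unitary_re_coercive) (auto intro: bounded_below_if_not_in_spectrum simp: not_less[symmetric])

section \<open>Products of symmetries\<close>

text \<open>The direction \<open>\<beta>\<close> is a positive combination of \<open>b\<close> and \<open>-\<i> b\<close>, so \<open>U\<close> stays coercive
  along it, and \<open>Re (\<beta> \<lambda>) = 0\<close> makes the real number \<open>\<langle>x, S x\<rangle>\<close> drop out of
  \<open>Re (\<beta> \<langle>x, S (S U - \<lambda>) x\<rangle>)\<close>.\<close>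

lemma symmetry_comp_shift_bounded_below:
  fixes S U :: "'a::chilbert_space \<Rightarrow> 'a"
  assumes S: "symmetry_op S" and b: "cmod b = 1"
    and coercive: "re_coercive b U" "re_coercive (- \<i> * b) U"
    and l: "cmod l = 1" "Re (b * l) * Im (b * l) \<le> 0"
  shows "bounded_below (\<lambda>x. S (U x) - scaleC l x)"
proof -
  define p where "p = Re (b * l)"
  define q where "q = Im (b * l)"
  have "p\<^sup>2 + q\<^sup>2 = 1"
    unfolding p_def q_def using l(1) b by (metis cmod_power2 norm_mult mult_1_left power_one)
  then have "0 < \<bar>q\<bar> + \<bar>p\<bar>"
    by (cases "p = 0") auto
  define \<beta> where "\<beta> = of_real \<bar>q\<bar> * b + of_real \<bar>p\<bar> * (- \<i> * b)"
  have "Re (\<beta> * l) = \<bar>q\<bar> * p + \<bar>p\<bar> * q"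
    unfolding \<beta>_def p_def q_def by (simp add: algebra_simps)
  also have "\<dots> = 0"
    using l(2) unfolding p_def[symmetric] q_def[symmetric]
    by (cases "p \<ge> 0"; cases "q \<ge> 0") (auto simp: abs_if mult_le_0_iff)
  finally have \<beta>l: "Re (\<beta> * l) = 0" .
  define T where "T x = U x - scaleC l (S x)" for x
  have "Re (\<beta> * cinner x (T x)) = Re (\<beta> * cinner x (U x))" for x
  proof -
    have "cnj (cinner x (S x)) = cinner x (S x)"
      using symmetry_opD(2)[OF S] unfolding is_adjoint_def by (metis cinner_commute)
    then have "Im (cinner x (S x)) = 0"
      using Reals_cnj_iff complex_is_Real_iff by blast
    then have "Re (\<beta> * l * cinner x (S x)) = 0"
      using \<beta>l by simp
    then show ?thesis
      by (simp add: T_def cinner_diff_right cinner_scaleC_right right_diff_distrib mult.assoc)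
  qed
  moreover have "re_coercive \<beta> U"
    unfolding \<beta>_def using coercive \<open>0 < \<bar>q\<bar> + \<bar>p\<bar>\<close> by (intro re_coercive_cone) auto
  ultimately have "re_coercive \<beta> T"
    unfolding re_coercive_def by simp
  then have "bounded_below (\<lambda>x. S (T x))"
    using bounded_below_comp bounded_below_if_re_coercive bounded_below_isometry symmetry_opD(4)[OF S]
    by metis
  moreover have "S (T x) = S (U x) - scaleC l x" for x
    using symmetry_opD[OF S] by (simp add: T_def clinear_diff clinear_scaleC)
  ultimately show ?thesis
    by simp
qed

text \<open>\<open>W = S T\<close> is conjugate by \<open>S\<close> to \<open>T S = W\<^sup>-\<^sup>1\<close>, whence \<open>\<parallel>(W - \<lambda>) x\<parallel> = \<parallel>(W - cnj \<lambda>) (S x)\<parallel>\<close>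
  for \<open>\<bar>\<lambda>\<bar> = 1\<close>.\<close>

lemma two_symmetries_shift_bounded_below_cnj:
  fixes S T :: "'a::chilbert_space \<Rightarrow> 'a"
  assumes S: "symmetry_op S" and T: "symmetry_op T" and l: "cmod l = 1"
    and "bounded_below (\<lambda>x. S (T x) - scaleC (cnj l) x)"
  shows "bounded_below (\<lambda>x. S (T x) - scaleC l x)"
proof -
  define D where "D x = S (T x) - scaleC (cnj l) x" for x
  have DS: "bounded_below (\<lambda>x. D (S x))"
    unfolding D_def using assms(4) bounded_below_isometry[OF symmetry_opD(4)[OF S]]
    by (rule bounded_below_comp)
  have "1 * norm (D (S x)) \<le> norm (S (T x) - scaleC l x)" for x
  proof -
    have "l * cnj l = 1"
      using l complex_norm_square[of l] by simp
    then have "T (S (S (T x) - scaleC l x)) = scaleC (- l) (S (D (S x)))"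
      using symmetry_opD[OF S] symmetry_opD[OF T]
      by (simp add: D_def clinear_diff clinear_scaleC scaleC.scale_right_diff_distrib)
    then have "norm (S (T x) - scaleC l x) = cmod l * norm (D (S x))"
      by (metis norm_scaleC norm_minus_cancel symmetry_opD(4)[OF S] symmetry_opD(4)[OF T])
    with l show ?thesis
      by simp
  qed
  then show ?thesis
    by (rule bounded_below_norm_mono[OF DS zero_less_one])
qed

lemma product_of_two_symmetries_shift_bounded_below:
  fixes U S1 S2 S3 :: "'a::chilbert_space \<Rightarrow> 'a"
  assumes S: "symmetry_op S1" "symmetry_op S2" "symmetry_op S3" and U: "U = S1 \<circ> S2 \<circ> S3"
    and b: "cmod b = 1" "b\<^sup>2 = 1 \<or> b\<^sup>2 = -1"
    and coercive: "re_coercive b U" "re_coercive (- \<i> * b) U" and l: "cmod l = 1"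
  shows "bounded_below (\<lambda>x. S2 (S3 x) - scaleC l x)"
proof -
  have W: "S2 (S3 x) = S1 (U x)" for x
    using U symmetry_opD(3)[OF S(1)] by simp
  have "b * cnj l = b\<^sup>2 * cnj (b * l)"
    using b(1) complex_norm_square[of b] by (simp add: power2_eq_square algebra_simps)
  moreover have "Re (c * cnj w) * Im (c * cnj w) = - (Re w * Im w)" if "c = 1 \<or> c = -1" for c w
    using that by auto
  ultimately have "Re (b * cnj l) * Im (b * cnj l) = - (Re (b * l) * Im (b * l))"
    using b(2) by presburger
  then consider "Re (b * l) * Im (b * l) \<le> 0" | "Re (b * cnj l) * Im (b * cnj l) \<le> 0"
    by linarith
  then show ?thesis
  proof cases
    case 1
    then show ?thesis
      unfolding W using symmetry_comp_shift_bounded_below[OF S(1) b(1) coercive l] by simp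
  next
    case 2
    then have "bounded_below (\<lambda>x. S2 (S3 x) - scaleC (cnj l) x)"
      unfolding W using symmetry_comp_shift_bounded_below[OF S(1) b(1) coercive] l by simp
    then show ?thesis
      using two_symmetries_shift_bounded_below_cnj[OF S(2,3) l] by simp
  qed
qed

theorem proposition4p5:
  fixes U :: "'a::chilbert_space \<Rightarrow> 'a" and k :: nat
  assumes "\<exists>x::'a. x \<noteq> 0"
    and "unitary_op U"
    and "k \<in> {1, 2, 3, 4}"
    and "op_spectrum U \<subseteq> arcC k"
  shows "\<not> (\<exists>S1 S2 S3. symmetry_op S1 \<and> symmetry_op S2 \<and> symmetry_op S3 \<and> U = S1 \<circ> S2 \<circ> S3)"
proof
  assume "\<exists>S1 S2 S3. symmetry_op S1 \<and> symmetry_op S2 \<and> symmetry_op S3 \<and> U = S1 \<circ> S2 \<circ> S3"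
  then obtain S1 S2 S3 where S: "symmetry_op S1" "symmetry_op S2" "symmetry_op S3"
    and U: "U = S1 \<circ> S2 \<circ> S3"
    by blast
  define b where "b = cnj (\<i> ^ (k - 1))"
  have b: "cmod b = 1" "b\<^sup>2 = 1 \<or> b\<^sup>2 = -1"
    unfolding b_def by (simp add: norm_power) (rule cnj_i_power_square)
  have "0 < Re (b * l)" "0 < Re (- \<i> * b * l)" if "l \<in> op_spectrum U" for l
    using arcC_rotate_first_quadrant[of k l] that assms(3,4) unfolding b_def by auto
  then have "re_coercive b U" "re_coercive (- \<i> * b) U"
    using b(1) by (auto intro!: unitary_re_coercive_if_spectrum[OF assms(2)] simp: norm_mult)
  then have "bounded_below (\<lambda>x. (S2 \<circ> S3) x - scaleC l x)" if "cmod l = 1" for l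
    using product_of_two_symmetries_shift_bounded_below[OF S U b] that by simp
  moreover have "unitary_op (S2 \<circ> S3)"
    using S(2,3) unfolding symmetry_op_def by (blast intro: unitary_op_comp)
  ultimately have "re_coercive 1 (S2 \<circ> S3)" "re_coercive (-1) (S2 \<circ> S3)"
    by (auto intro: unitary_re_coercive)
  then have "re_coercive 0 (S2 \<circ> S3)"
    using re_coercive_cone[of 1 _ "-1" 1 1] by simp
  then show False
    using assms(1) re_coercive_zero_imp_trivial by blast
qed

end
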